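(* Let $\mathfrak g$ be a Lie algebra with a Cartan subalgebra $\mathfrak h$ and a root decomposition with roots $\Delta$. Every $\mathbb R$-linear order $>$ on $\langle\Delta\rangle_{\mathbb R}$ determines a unique Borel subalgebra, namely $\mathfrak h\oplus\bigoplus_{\alpha\in\Delta^+}\mathfrak g^\alpha$ with $\Delta^\pm:=\{\alpha\in\Delta:\pm\alpha>0\}$; conversely, every Borel subalgebra of $\mathfrak g$ (containing $\mathfrak h$) is determined in this way by some (in general not unique) $\mathbb R$-linear order on $\langle\Delta\rangle_{\mathbb R}$.
   Context: Over $\mathbb C$. A Cartan subalgebra is a self-normalizing nilpotent subalgebra $\mathfrak h$; a root decomposition is $\mathfrak g=\mathfrak h\oplus\bigoplus_{\alpha\in\mathfrak h^*\setminus\{0\}}\mathfrak g^\alpha$ with $\mathfrak g^\alpha$ the generalized weight spaces, $\Delta=\{\alpha\ne0:\mathfrak g^\alpha\ne0\}$, and $\langle\Delta\rangle_{\mathbb R}$ the real span of $\Delta$ in $\mathfrak h^*$. A decomposition $\Delta=\Delta^+\sqcup\Delta^-$ is triangular if the cone $\langle\Delta^+\cup-\Delta^-\rangle_{\mathbb R_+}$ contains no nonzero real vector subspace; a Borel subalgebra is $\mathfrak h\oplus\bigoplus_{\alpha\in\Delta^+}\mathfrak g^\alpha$ for a triangular decomposition. An $\mathbb R$-linear order on a real vector space is a total order compatible with addition and with multiplication by positive reals (multiplication by negative reals reversing it). *)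

theory Defs
  imports "HOL-Analysis.Analysis"
begin

definition lie_algebra :: "(complex \<Rightarrow> 'g::ab_group_add \<Rightarrow> 'g) \<Rightarrow> ('g \<Rightarrow> 'g \<Rightarrow> 'g) \<Rightarrow> bool" where
  "lie_algebra smul br \<longleftrightarrow> vector_space smul
     \<and> (\<forall>x y z. br (x + y) z = br x z + br y z)
     \<and> (\<forall>x y z. br x (y + z) = br x y + br x z)
     \<and> (\<forall>c x y. br (smul c x) y = smul c (br x y))
     \<and> (\<forall>c x y. br x (smul c y) = smul c (br x y))
     \<and> (\<forall>x. br x x = 0)
     \<and> (\<forall>x y z. br x (br y z) + br y (br z x) + br z (br x y) = 0)"

fun lower_central :: "(complex \<Rightarrow> 'g::ab_group_add \<Rightarrow> 'g) \<Rightarrow> ('g \<Rightarrow> 'g \<Rightarrow> 'g) \<Rightarrow> 'g set \<Rightarrow> nat \<Rightarrow> 'g set" where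
  "lower_central smul br H 0 = H"
| "lower_central smul br H (Suc k) =
     module.span smul {br x y | x y. x \<in> H \<and> y \<in> lower_central smul br H k}"

definition lie_subalgebra :: "(complex \<Rightarrow> 'g::ab_group_add \<Rightarrow> 'g) \<Rightarrow> ('g \<Rightarrow> 'g \<Rightarrow> 'g) \<Rightarrow> 'g set \<Rightarrow> bool" where
  "lie_subalgebra smul br H \<longleftrightarrow> module.subspace smul H \<and> (\<forall>x\<in>H. \<forall>y\<in>H. br x y \<in> H)"

definition nilpotent_subalgebra :: "(complex \<Rightarrow> 'g::ab_group_add \<Rightarrow> 'g) \<Rightarrow> ('g \<Rightarrow> 'g \<Rightarrow> 'g) \<Rightarrow> 'g set \<Rightarrow> bool" where
  "nilpotent_subalgebra smul br H \<longleftrightarrow> lie_subalgebra smul br H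
     \<and> (\<exists>n. lower_central smul br H n = {0})"

definition normalizer :: "('g \<Rightarrow> 'g \<Rightarrow> 'g) \<Rightarrow> 'g set \<Rightarrow> 'g set" where
  "normalizer br H = {x. \<forall>y\<in>H. br x y \<in> H}"

definition cartan_subalgebra :: "(complex \<Rightarrow> 'g::ab_group_add \<Rightarrow> 'g) \<Rightarrow> ('g \<Rightarrow> 'g \<Rightarrow> 'g) \<Rightarrow> 'g set \<Rightarrow> bool" where
  "cartan_subalgebra smul br H \<longleftrightarrow> nilpotent_subalgebra smul br H \<and> normalizer br H = H"

text \<open>The dual space h^*: complex-linear functionals on H, represented as functions
  on 'g that vanish outside H (so that equality of functionals is equality of functions).\<close>
definition hdual :: "(complex \<Rightarrow> 'g::ab_group_add \<Rightarrow> 'g) \<Rightarrow> 'g set \<Rightarrow> ('g \<Rightarrow> complex) set" where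
  "hdual smul H = {\<alpha>. (\<forall>x\<in>H. \<forall>y\<in>H. \<alpha> (x + y) = \<alpha> x + \<alpha> y)
                     \<and> (\<forall>c. \<forall>x\<in>H. \<alpha> (smul c x) = c * \<alpha> x)
                     \<and> (\<forall>x. x \<notin> H \<longrightarrow> \<alpha> x = 0)}"

definition gen_weight_space :: "(complex \<Rightarrow> 'g::ab_group_add \<Rightarrow> 'g) \<Rightarrow> ('g \<Rightarrow> 'g \<Rightarrow> 'g) \<Rightarrow> 'g set
     \<Rightarrow> ('g \<Rightarrow> complex) \<Rightarrow> 'g set" where
  "gen_weight_space smul br H \<alpha> =
     {x. \<forall>h\<in>H. \<exists>n. ((\<lambda>z. br h z - smul (\<alpha> h) z) ^^ n) x = 0}"

definition roots :: "(complex \<Rightarrow> 'g::ab_group_add \<Rightarrow> 'g) \<Rightarrow> ('g \<Rightarrow> 'g \<Rightarrow> 'g) \<Rightarrow> 'g set \<Rightarrow> ('g \<Rightarrow> complex) set" where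
  "roots smul br H = {\<alpha> \<in> hdual smul H. \<alpha> \<noteq> (\<lambda>_. 0) \<and> gen_weight_space smul br H \<alpha> \<noteq> {0}}"

definition root_decomposition :: "(complex \<Rightarrow> 'g::ab_group_add \<Rightarrow> 'g) \<Rightarrow> ('g \<Rightarrow> 'g \<Rightarrow> 'g) \<Rightarrow> 'g set \<Rightarrow> bool" where
  "root_decomposition smul br H \<longleftrightarrow>
     (\<forall>x. \<exists>x0 S v. x0 \<in> H \<and> finite S \<and> S \<subseteq> hdual smul H - {\<lambda>_. 0}
          \<and> (\<forall>\<alpha>\<in>S. v \<alpha> \<in> gen_weight_space smul br H \<alpha>) \<and> x = x0 + (\<Sum>\<alpha>\<in>S. v \<alpha>))
   \<and> (\<forall>x0 S v. x0 \<in> H \<and> finite S \<and> S \<subseteq> hdual smul H - {\<lambda>_. 0}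
          \<and> (\<forall>\<alpha>\<in>S. v \<alpha> \<in> gen_weight_space smul br H \<alpha>) \<and> x0 + (\<Sum>\<alpha>\<in>S. v \<alpha>) = 0
          \<longrightarrow> x0 = 0 \<and> (\<forall>\<alpha>\<in>S. v \<alpha> = 0))"

definition rcomb :: "('g \<Rightarrow> complex) set \<Rightarrow> (('g \<Rightarrow> complex) \<Rightarrow> real) \<Rightarrow> 'g \<Rightarrow> complex" where
  "rcomb S c = (\<lambda>x. \<Sum>\<alpha>\<in>S. complex_of_real (c \<alpha>) * \<alpha> x)"

definition real_span :: "('g \<Rightarrow> complex) set \<Rightarrow> ('g \<Rightarrow> complex) set" where
  "real_span A = {rcomb S c | S c. finite S \<and> S \<subseteq> A}"

definition real_cone :: "('g \<Rightarrow> complex) set \<Rightarrow> ('g \<Rightarrow> complex) set" where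
  "real_cone A = {rcomb S c | S c. finite S \<and> S \<subseteq> A \<and> (\<forall>\<alpha>\<in>S. c \<alpha> \<ge> 0)}"

definition real_subspace_fn :: "('g \<Rightarrow> complex) set \<Rightarrow> bool" where
  "real_subspace_fn V \<longleftrightarrow> (\<lambda>_. 0) \<in> V \<and> (\<forall>u\<in>V. \<forall>w\<in>V. (\<lambda>x. u x + w x) \<in> V)
     \<and> (\<forall>r::real. \<forall>u\<in>V. (\<lambda>x. complex_of_real r * u x) \<in> V)"

definition triangular :: "(complex \<Rightarrow> 'g::ab_group_add \<Rightarrow> 'g) \<Rightarrow> ('g \<Rightarrow> 'g \<Rightarrow> 'g) \<Rightarrow> 'g set
     \<Rightarrow> ('g \<Rightarrow> complex) set \<Rightarrow> ('g \<Rightarrow> complex) set \<Rightarrow> bool" where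
  "triangular smul br H P N \<longleftrightarrow>
     P \<union> N = roots smul br H \<and> P \<inter> N = {}
     \<and> (\<forall>V. real_subspace_fn V \<and> V \<subseteq> real_cone (P \<union> (\<lambda>\<alpha> x. - \<alpha> x) ` N) \<longrightarrow> V \<subseteq> {\<lambda>_. 0})"

text \<open>The subalgebra h \<oplus> \<Oplus>_{\<alpha>\<in>P} g^\<alpha> (the sum is direct by the root decomposition).\<close>
definition borel_of :: "(complex \<Rightarrow> 'g::ab_group_add \<Rightarrow> 'g) \<Rightarrow> ('g \<Rightarrow> 'g \<Rightarrow> 'g) \<Rightarrow> 'g set
     \<Rightarrow> ('g \<Rightarrow> complex) set \<Rightarrow> 'g set" where
  "borel_of smul br H P = module.span smul (H \<union> \<Union> (gen_weight_space smul br H ` P))"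

definition borel_subalgebra :: "(complex \<Rightarrow> 'g::ab_group_add \<Rightarrow> 'g) \<Rightarrow> ('g \<Rightarrow> 'g \<Rightarrow> 'g) \<Rightarrow> 'g set
     \<Rightarrow> 'g set \<Rightarrow> bool" where
  "borel_subalgebra smul br H B \<longleftrightarrow>
     (\<exists>P N. triangular smul br H P N \<and> B = borel_of smul br H P)"

definition real_linear_order :: "('g \<Rightarrow> complex) set \<Rightarrow> (('g \<Rightarrow> complex) \<Rightarrow> ('g \<Rightarrow> complex) \<Rightarrow> bool) \<Rightarrow> bool" where
  "real_linear_order E le \<longleftrightarrow>
     (\<forall>a b. le a b \<longrightarrow> a \<in> E \<and> b \<in> E)
     \<and> (\<forall>a\<in>E. le a a)
     \<and> (\<forall>a\<in>E. \<forall>b\<in>E. le a b \<and> le b a \<longrightarrow> a = b)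
     \<and> (\<forall>a\<in>E. \<forall>b\<in>E. \<forall>c\<in>E. le a b \<and> le b c \<longrightarrow> le a c)
     \<and> (\<forall>a\<in>E. \<forall>b\<in>E. le a b \<or> le b a)
     \<and> (\<forall>a\<in>E. \<forall>b\<in>E. \<forall>c\<in>E. le a b \<longrightarrow> le (\<lambda>x. a x + c x) (\<lambda>x. b x + c x))
     \<and> (\<forall>a\<in>E. \<forall>b\<in>E. \<forall>r::real. r > 0 \<and> le a b \<longrightarrow>
           le (\<lambda>x. complex_of_real r * a x) (\<lambda>x. complex_of_real r * b x))
     \<and> (\<forall>a\<in>E. \<forall>b\<in>E. \<forall>r::real. r < 0 \<and> le a b \<longrightarrow>
           le (\<lambda>x. complex_of_real r * b x) (\<lambda>x. complex_of_real r * a x))"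

definition pos_roots :: "(complex \<Rightarrow> 'g::ab_group_add \<Rightarrow> 'g) \<Rightarrow> ('g \<Rightarrow> 'g \<Rightarrow> 'g) \<Rightarrow> 'g set
     \<Rightarrow> (('g \<Rightarrow> complex) \<Rightarrow> ('g \<Rightarrow> complex) \<Rightarrow> bool) \<Rightarrow> ('g \<Rightarrow> complex) set" where
  "pos_roots smul br H le = {\<alpha> \<in> roots smul br H. le (\<lambda>_. 0) \<alpha> \<and> \<alpha> \<noteq> (\<lambda>_. 0)}"

definition neg_roots :: "(complex \<Rightarrow> 'g::ab_group_add \<Rightarrow> 'g) \<Rightarrow> ('g \<Rightarrow> 'g \<Rightarrow> 'g) \<Rightarrow> 'g set
     \<Rightarrow> (('g \<Rightarrow> complex) \<Rightarrow> ('g \<Rightarrow> complex) \<Rightarrow> bool) \<Rightarrow> ('g \<Rightarrow> complex) set" where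
  "neg_roots smul br H le = {\<alpha> \<in> roots smul br H. le \<alpha> (\<lambda>_. 0) \<and> \<alpha> \<noteq> (\<lambda>_. 0)}"

end

theory Submission
  imports Defs
begin

text \<open>Nothing Lie-theoretic is used beyond the roots being nonzero: everything happens in
  the real vector space \<open>\<langle>\<Delta>\<rangle>\<^sub>\<real>\<close> and its cone \<open>\<langle>\<Delta>\<^sup>+ \<union> -\<Delta>\<^sup>-\<rangle>\<^sub>\<real>\<^sub>+\<close>.
  An \<real>-linear order makes every element of this cone nonnegative, and a subspace of
  nonnegative elements is trivial. Conversely, triangularity says that the cone is pointed;
  by Zorn's lemma it lies in a maximal pointed convex cone \<open>M \<subseteq> \<langle>\<Delta>\<rangle>\<^sub>\<real>\<close>, maximality forces
  \<open>v \<in> M\<close> or \<open>-v \<in> M\<close> for every \<open>v\<close>, and so \<open>M\<close> is the nonnegative cone of an \<real>-linear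
  order, whose positive roots are exactly \<open>\<Delta>\<^sup>+\<close>.\<close>

definition convex_cone_fn :: "('a \<Rightarrow> complex) set \<Rightarrow> bool" where
  "convex_cone_fn K \<longleftrightarrow> (\<lambda>_. 0) \<in> K \<and> (\<forall>u\<in>K. \<forall>w\<in>K. (\<lambda>x. u x + w x) \<in> K)
     \<and> (\<forall>r::real. r \<ge> 0 \<longrightarrow> (\<forall>u\<in>K. (\<lambda>x. complex_of_real r * u x) \<in> K))"

definition pointed_fn :: "('a \<Rightarrow> complex) set \<Rightarrow> bool" where
  "pointed_fn K \<longleftrightarrow> (\<forall>v\<in>K. (\<lambda>x. - v x) \<in> K \<longrightarrow> v = (\<lambda>_. 0))"

definition cone_adjoin :: "('a \<Rightarrow> complex) set \<Rightarrow> ('a \<Rightarrow> complex) \<Rightarrow> ('a \<Rightarrow> complex) set" where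
  "cone_adjoin K v = {(\<lambda>x. m x + complex_of_real a * v x) | m a. m \<in> K \<and> a \<ge> 0}"

definition cone_order :: "('a \<Rightarrow> complex) set \<Rightarrow> ('a \<Rightarrow> complex) set
     \<Rightarrow> ('a \<Rightarrow> complex) \<Rightarrow> ('a \<Rightarrow> complex) \<Rightarrow> bool" where
  "cone_order E K a b \<longleftrightarrow> a \<in> E \<and> b \<in> E \<and> (\<lambda>x. b x - a x) \<in> K"

lemma real_subspace_fn_zero: "real_subspace_fn E \<Longrightarrow> (\<lambda>_. 0) \<in> E"
  and real_subspace_fn_add: "real_subspace_fn E \<Longrightarrow> u \<in> E \<Longrightarrow> w \<in> E \<Longrightarrow> (\<lambda>x. u x + w x) \<in> E"
  and real_subspace_fn_scale: "real_subspace_fn E \<Longrightarrow> u \<in> E \<Longrightarrow> (\<lambda>x. complex_of_real r * u x) \<in> E"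
  by (simp_all add: real_subspace_fn_def)

lemma real_subspace_fn_neg: "real_subspace_fn E \<Longrightarrow> u \<in> E \<Longrightarrow> (\<lambda>x. - u x) \<in> E"
  using real_subspace_fn_scale[of E u "-1"] by simp

lemma real_subspace_fn_diff: "real_subspace_fn E \<Longrightarrow> u \<in> E \<Longrightarrow> w \<in> E \<Longrightarrow> (\<lambda>x. u x - w x) \<in> E"
  using real_subspace_fn_add[of E u "\<lambda>x. - w x"] real_subspace_fn_neg[of E w] by simp

lemma convex_cone_fn_zero: "convex_cone_fn K \<Longrightarrow> (\<lambda>_. 0) \<in> K"
  and convex_cone_fn_add: "convex_cone_fn K \<Longrightarrow> u \<in> K \<Longrightarrow> w \<in> K \<Longrightarrow> (\<lambda>x. u x + w x) \<in> K"
  and convex_cone_fn_scale: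
    "convex_cone_fn K \<Longrightarrow> r \<ge> 0 \<Longrightarrow> u \<in> K \<Longrightarrow> (\<lambda>x. complex_of_real r * u x) \<in> K"
  by (simp_all add: convex_cone_fn_def)

lemma pointed_fnD: "pointed_fn K \<Longrightarrow> v \<in> K \<Longrightarrow> (\<lambda>x. - v x) \<in> K \<Longrightarrow> v = (\<lambda>_. 0)"
  unfolding pointed_fn_def by blast

lemma rcomb_empty: "rcomb {} c = (\<lambda>_. 0)"
  by (simp add: rcomb_def)

lemma rcomb_insert:
  "finite S \<Longrightarrow> a \<notin> S \<Longrightarrow> rcomb (insert a S) c = (\<lambda>x. complex_of_real (c a) * a x + rcomb S c x)"
  by (simp add: rcomb_def)

lemma rcomb_singleton: "rcomb {a} (\<lambda>_. 1) = a"
  by (simp add: rcomb_def)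

lemma rcomb_scale: "(\<lambda>x. complex_of_real r * rcomb S c x) = rcomb S (\<lambda>\<alpha>. r * c \<alpha>)"
  by (simp add: rcomb_def sum_distrib_left mult.assoc)

lemma rcomb_superset:
  assumes "finite T" "S \<subseteq> T"
  shows "rcomb S c = rcomb T (\<lambda>\<alpha>. if \<alpha> \<in> S then c \<alpha> else 0)"
proof -
  have "(\<Sum>\<alpha>\<in>S. complex_of_real (c \<alpha>) * \<alpha> x)
      = (\<Sum>\<alpha>\<in>T. complex_of_real (if \<alpha> \<in> S then c \<alpha> else 0) * \<alpha> x)" for x
    using assms by (intro sum.mono_neutral_cong_left) auto
  then show ?thesis by (simp add: rcomb_def)
qed

lemma rcomb_add_union:
  assumes "finite S" "finite T"
  shows "(\<lambda>x. rcomb S c x + rcomb T d x) =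
    rcomb (S \<union> T) (\<lambda>\<alpha>. (if \<alpha> \<in> S then c \<alpha> else 0) + (if \<alpha> \<in> T then d \<alpha> else 0))"
  using rcomb_superset[of "S \<union> T" S c] rcomb_superset[of "S \<union> T" T d] assms
  by (simp add: rcomb_def sum.distrib distrib_right)

lemma rcomb_mem_real_subspace:
  assumes "real_subspace_fn V" "finite S" "S \<subseteq> V"
  shows "rcomb S c \<in> V"
  using assms(2,3)
proof (induction S rule: finite_induct)
  case empty
  then show ?case using assms(1) by (simp add: rcomb_empty real_subspace_fn_zero)
next
  case (insert a S)
  then show ?case
    using assms(1) by (simp add: rcomb_insert real_subspace_fn_add real_subspace_fn_scale)
qed

lemma real_subspace_fn_real_span: "real_subspace_fn (real_span A)"
  unfolding real_subspace_fn_def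
proof (intro conjI ballI allI)
  show "(\<lambda>_. 0) \<in> real_span A"
    unfolding real_span_def by (intro CollectI exI[of _ "{}"]) (simp add: rcomb_empty)
next
  fix u w assume "u \<in> real_span A" "w \<in> real_span A"
  then obtain S c T d where "u = rcomb S c" "finite S" "S \<subseteq> A" "w = rcomb T d" "finite T" "T \<subseteq> A"
    unfolding real_span_def by blast
  then show "(\<lambda>x. u x + w x) \<in> real_span A"
    unfolding real_span_def using rcomb_add_union[of S T c d]
    by (intro CollectI exI[of _ "S \<union> T"] exI) auto
next
  fix r :: real and u assume "u \<in> real_span A"
  then obtain S c where "u = rcomb S c" "finite S" "S \<subseteq> A"
    unfolding real_span_def by blast
  then show "(\<lambda>x. complex_of_real r * u x) \<in> real_span A"
    unfolding real_span_def using rcomb_scale[of r S c] by (intro CollectI exI[of _ S] exI) auto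
qed

lemma convex_cone_fn_real_cone: "convex_cone_fn (real_cone A)"
  unfolding convex_cone_fn_def
proof (intro conjI ballI allI impI)
  show "(\<lambda>_. 0) \<in> real_cone A"
    unfolding real_cone_def by (intro CollectI exI[of _ "{}"]) (simp add: rcomb_empty)
next
  fix u w assume "u \<in> real_cone A" "w \<in> real_cone A"
  then obtain S c T d where "u = rcomb S c" "finite S" "S \<subseteq> A" "\<forall>\<alpha>\<in>S. c \<alpha> \<ge> 0"
     "w = rcomb T d" "finite T" "T \<subseteq> A" "\<forall>\<alpha>\<in>T. d \<alpha> \<ge> 0"
    unfolding real_cone_def by blast
  then show "(\<lambda>x. u x + w x) \<in> real_cone A"
    unfolding real_cone_def using rcomb_add_union[of S T c d]
    by (intro CollectI exI[of _ "S \<union> T"] exI conjI) auto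
next
  fix r :: real and u assume "r \<ge> 0" "u \<in> real_cone A"
  then obtain S c where "u = rcomb S c" "finite S" "S \<subseteq> A" "\<forall>\<alpha>\<in>S. c \<alpha> \<ge> 0"
    unfolding real_cone_def by blast
  with \<open>r \<ge> 0\<close> show "(\<lambda>x. complex_of_real r * u x) \<in> real_cone A"
    unfolding real_cone_def using rcomb_scale[of r S c]
    by (intro CollectI exI[of _ S] exI[of _ "\<lambda>\<alpha>. r * c \<alpha>"]) auto
qed

lemma subset_real_span: "A \<subseteq> real_span A"
proof
  fix a assume "a \<in> A"
  then show "a \<in> real_span A"
    unfolding real_span_def using rcomb_singleton[of a, symmetric]
    by (intro CollectI exI[of _ "{a}"] exI[of _ "\<lambda>_. 1"]) simp
qed

lemma subset_real_cone: "A \<subseteq> real_cone A"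
proof
  fix a assume "a \<in> A"
  then show "a \<in> real_cone A"
    unfolding real_cone_def using rcomb_singleton[of a, symmetric]
    by (intro CollectI exI[of _ "{a}"] exI[of _ "\<lambda>_. 1"]) simp
qed

lemma real_cone_subset_real_subspace: "real_subspace_fn V \<Longrightarrow> A \<subseteq> V \<Longrightarrow> real_cone A \<subseteq> V"
  unfolding real_cone_def using rcomb_mem_real_subspace by blast

context
  fixes E :: "('a \<Rightarrow> complex) set" and le
  assumes order: "real_linear_order E le"
begin

lemma order_mem: "le a b \<Longrightarrow> a \<in> E \<and> b \<in> E"
  using conjunct1[OF order[unfolded real_linear_order_def]] by blast

lemma order_refl: "a \<in> E \<Longrightarrow> le a a"
  and order_antisym: "a \<in> E \<Longrightarrow> b \<in> E \<Longrightarrow> le a b \<Longrightarrow> le b a \<Longrightarrow> a = b"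
  and order_trans: "a \<in> E \<Longrightarrow> b \<in> E \<Longrightarrow> c \<in> E \<Longrightarrow> le a b \<Longrightarrow> le b c \<Longrightarrow> le a c"
  and order_total: "a \<in> E \<Longrightarrow> b \<in> E \<Longrightarrow> le a b \<or> le b a"
  and order_add_right:
    "a \<in> E \<Longrightarrow> b \<in> E \<Longrightarrow> c \<in> E \<Longrightarrow> le a b \<Longrightarrow> le (\<lambda>x. a x + c x) (\<lambda>x. b x + c x)"
  and order_scale_pos: "a \<in> E \<Longrightarrow> b \<in> E \<Longrightarrow> r > 0 \<Longrightarrow> le a b \<Longrightarrow>
    le (\<lambda>x. complex_of_real r * a x) (\<lambda>x. complex_of_real r * b x)"
  and order_scale_neg: "a \<in> E \<Longrightarrow> b \<in> E \<Longrightarrow> r < 0 \<Longrightarrow> le a b \<Longrightarrow>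
    le (\<lambda>x. complex_of_real r * b x) (\<lambda>x. complex_of_real r * a x)"
  using order unfolding real_linear_order_def by blast+

lemma order_neg: "le a b \<Longrightarrow> le (\<lambda>x. - b x) (\<lambda>x. - a x)"
  using order_mem[of a b] order_scale_neg[of a b "-1"] by simp

lemma order_nonneg_add:
  assumes a: "le (\<lambda>_. 0) a" and b: "le (\<lambda>_. 0) b"
  shows "le (\<lambda>_. 0) (\<lambda>x. a x + b x)"
proof -
  have E: "(\<lambda>_. 0) \<in> E" "a \<in> E" "b \<in> E" using order_mem a b by blast+
  have "le b (\<lambda>x. a x + b x)" using order_add_right[OF E a] by simp
  moreover from this have "(\<lambda>x. a x + b x) \<in> E" using order_mem by blast
  ultimately show ?thesis using order_trans[OF E(1,3) _ b] by blast
qed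

lemma order_nonneg_scale:
  assumes r: "r \<ge> 0" and a: "le (\<lambda>_. 0) a"
  shows "le (\<lambda>_. 0) (\<lambda>x. complex_of_real r * a x)"
proof -
  have E: "(\<lambda>_. 0) \<in> E" "a \<in> E" using order_mem[OF a] by blast+
  show ?thesis
  proof (cases "r = 0")
    case True
    then show ?thesis using order_refl[OF E(1)] by simp
  next
    case False
    with r show ?thesis using order_scale_pos[OF E, of r] a by simp
  qed
qed

lemma order_nonneg_real_cone:
  assumes zero: "(\<lambda>_. 0) \<in> E" and nonneg: "\<forall>a\<in>A. le (\<lambda>_. 0) a" and v: "v \<in> real_cone A"
  shows "le (\<lambda>_. 0) v"
proof -
  obtain S c where "v = rcomb S c" "finite S" "S \<subseteq> A" "\<forall>\<alpha>\<in>S. c \<alpha> \<ge> 0"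
    using v unfolding real_cone_def by blast
  moreover have "finite S \<Longrightarrow> S \<subseteq> A \<Longrightarrow> \<forall>\<alpha>\<in>S. c \<alpha> \<ge> 0 \<Longrightarrow> le (\<lambda>_. 0) (rcomb S c)"
  proof (induction S rule: finite_induct)
    case empty
    then show ?case using order_refl[OF zero] by (simp add: rcomb_empty)
  next
    case (insert a S)
    then show ?case
      using nonneg by (simp add: rcomb_insert order_nonneg_add order_nonneg_scale)
  qed
  ultimately show ?thesis by simp
qed

lemma order_nonneg_subspace_trivial:
  assumes V: "real_subspace_fn V" and nonneg: "\<forall>v\<in>V. le (\<lambda>_. 0) v"
  shows "V \<subseteq> {\<lambda>_. 0}"
proof
  fix v assume "v \<in> V"
  then have v: "le (\<lambda>_. 0) v" and nv: "le (\<lambda>_. 0) (\<lambda>x. - v x)"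
    using nonneg real_subspace_fn_neg[OF V] by blast+
  have "le v (\<lambda>_. 0)" using order_neg[OF nv] by simp
  then have "v = (\<lambda>_. 0)" using order_antisym[OF _ _ _ v] order_mem[OF v] by blast
  then show "v \<in> {\<lambda>_. 0}" by simp
qed

end

lemma pointed_fn_if_no_subspace:
  assumes C: "convex_cone_fn C"
    and no_subspace: "\<And>V. real_subspace_fn V \<Longrightarrow> V \<subseteq> C \<Longrightarrow> V \<subseteq> {\<lambda>_. 0}"
  shows "pointed_fn C"
  unfolding pointed_fn_def
proof (intro ballI impI)
  fix v assume v: "v \<in> C" and nv: "(\<lambda>x. - v x) \<in> C"
  define L where "L = range (\<lambda>r::real. \<lambda>x. complex_of_real r * v x)"
  have "real_subspace_fn L"
    unfolding real_subspace_fn_def L_def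
  proof (intro conjI ballI allI)
    show "(\<lambda>_. 0) \<in> range (\<lambda>r::real. \<lambda>x. complex_of_real r * v x)"
      by (rule range_eqI[where x="0::real"]) simp
  next
    fix u w assume "u \<in> range (\<lambda>r::real. \<lambda>x. complex_of_real r * v x)"
      "w \<in> range (\<lambda>r::real. \<lambda>x. complex_of_real r * v x)"
    then obtain r s where "u = (\<lambda>x. complex_of_real r * v x)" "w = (\<lambda>x. complex_of_real s * v x)"
      by blast
    then show "(\<lambda>x. u x + w x) \<in> range (\<lambda>r::real. \<lambda>x. complex_of_real r * v x)"
      by (intro range_eqI[where x="r + s"]) (simp add: distrib_right)
  next
    fix r :: real and u assume "u \<in> range (\<lambda>r::real. \<lambda>x. complex_of_real r * v x)"
    then obtain s where "u = (\<lambda>x. complex_of_real s * v x)" by blast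
    then show "(\<lambda>x. complex_of_real r * u x) \<in> range (\<lambda>r::real. \<lambda>x. complex_of_real r * v x)"
      by (intro range_eqI[where x="r * s"]) (simp add: mult.assoc)
  qed
  moreover have "L \<subseteq> C"
  proof
    fix u assume "u \<in> L"
    then obtain r where u: "u = (\<lambda>x. complex_of_real r * v x)" unfolding L_def by blast
    show "u \<in> C"
    proof (cases "r \<ge> 0")
      case True
      then show ?thesis using convex_cone_fn_scale[OF C True v] u by simp
    next
      case False
      then have "- r \<ge> 0" by simp
      from convex_cone_fn_scale[OF C this nv] show ?thesis using u by simp
    qed
  qed
  moreover have "v \<in> L" unfolding L_def by (rule range_eqI[where x="1::real"]) simp
  ultimately show "v = (\<lambda>_. 0)" using no_subspace by blast
qed

lemma subset_cone_adjoin: "K \<subseteq> cone_adjoin K v"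
  unfolding cone_adjoin_def by (force intro: exI[of _ "0::real"])

lemma mem_cone_adjoin: "convex_cone_fn K \<Longrightarrow> v \<in> cone_adjoin K v"
  unfolding cone_adjoin_def
  by (force intro: exI[of _ "1::real"] exI[of _ "\<lambda>_. 0"] convex_cone_fn_zero)

lemma cone_adjoin_subset_real_subspace:
  assumes "real_subspace_fn E" "K \<subseteq> E" "v \<in> E"
  shows "cone_adjoin K v \<subseteq> E"
  unfolding cone_adjoin_def
  using assms real_subspace_fn_add real_subspace_fn_scale by blast

lemma convex_cone_fn_cone_adjoin:
  assumes K: "convex_cone_fn K"
  shows "convex_cone_fn (cone_adjoin K v)"
  unfolding convex_cone_fn_def
proof (intro conjI ballI allI impI)
  show "(\<lambda>_. 0) \<in> cone_adjoin K v"
    using subset_cone_adjoin convex_cone_fn_zero[OF K] by blast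
next
  fix u w assume "u \<in> cone_adjoin K v" "w \<in> cone_adjoin K v"
  then obtain m a n b where "u = (\<lambda>x. m x + complex_of_real a * v x)" "m \<in> K" "a \<ge> 0"
    "w = (\<lambda>x. n x + complex_of_real b * v x)" "n \<in> K" "b \<ge> 0"
    unfolding cone_adjoin_def by blast
  then show "(\<lambda>x. u x + w x) \<in> cone_adjoin K v"
    unfolding cone_adjoin_def using convex_cone_fn_add[OF K]
    by (intro CollectI exI[of _ "\<lambda>x. m x + n x"] exI[of _ "a + b"]) (simp add: algebra_simps)
next
  fix r :: real and u assume r: "r \<ge> 0" and "u \<in> cone_adjoin K v"
  then obtain m a where u: "u = (\<lambda>x. m x + complex_of_real a * v x)" "m \<in> K" "a \<ge> 0"
    unfolding cone_adjoin_def by blast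
  show "(\<lambda>x. complex_of_real r * u x) \<in> cone_adjoin K v"
    unfolding cone_adjoin_def
  proof (intro CollectI exI conjI)
    show "(\<lambda>x. complex_of_real r * u x)
        = (\<lambda>x. complex_of_real r * m x + complex_of_real (r * a) * v x)"
      by (simp add: u(1) algebra_simps)
    show "(\<lambda>x. complex_of_real r * m x) \<in> K" using convex_cone_fn_scale[OF K r u(2)] .
    show "r * a \<ge> 0" using r u(3) by simp
  qed
qed

lemma pointed_fn_cone_adjoin:
  assumes K: "convex_cone_fn K" "pointed_fn K" and v: "(\<lambda>x. - v x) \<notin> K"
  shows "pointed_fn (cone_adjoin K v)"
  unfolding pointed_fn_def
proof (intro ballI impI)
  fix w assume "w \<in> cone_adjoin K v" "(\<lambda>x. - w x) \<in> cone_adjoin K v"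
  then obtain m a n b where w: "w = (\<lambda>x. m x + complex_of_real a * v x)" "m \<in> K" "a \<ge> 0"
    and nw: "(\<lambda>x. - w x) = (\<lambda>x. n x + complex_of_real b * v x)" "n \<in> K" "b \<ge> 0"
    unfolding cone_adjoin_def by blast
  have sum: "m x + n x = - complex_of_real (a + b) * v x" for x
  proof -
    have "- (m x + complex_of_real a * v x) = n x + complex_of_real b * v x"
      using fun_cong[OF nw(1), of x] w(1) by simp
    then show ?thesis unfolding of_real_add by algebra
  qed
  show "w = (\<lambda>_. 0)"
  proof (cases "a + b = 0")
    case True
    then have "w = m" "(\<lambda>x. - w x) = n" using w nw by auto
    then show ?thesis using pointed_fnD[OF K(2)] w(2) nw(2) by blast
  next
    case False
    then have ab: "a + b > 0" using w(3) nw(3) by linarith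
    have "(\<lambda>x. complex_of_real (1 / (a + b)) * (m x + n x)) \<in> K"
      using ab by (intro convex_cone_fn_scale[OF K(1)] convex_cone_fn_add[OF K(1) w(2) nw(2)]) simp
    moreover have "(\<lambda>x. complex_of_real (1 / (a + b)) * (m x + n x)) = (\<lambda>x. - v x)"
    proof
      fix x
      have "complex_of_real (a + b) \<noteq> 0" using ab by (metis of_real_eq_0_iff less_irrefl)
      then show "complex_of_real (1 / (a + b)) * (m x + n x) = - v x"
        unfolding sum by (simp add: field_simps)
    qed
    ultimately show ?thesis using v by simp
  qed
qed

lemma maximal_pointed_cone_total:
  assumes E: "real_subspace_fn E"
    and M: "M \<subseteq> E" "convex_cone_fn M" "pointed_fn M"
    and maximal: "\<And>K. M \<subseteq> K \<Longrightarrow> K \<subseteq> E \<Longrightarrow> convex_cone_fn K \<Longrightarrow> pointed_fn K \<Longrightarrow> K = M"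
    and v: "v \<in> E"
  shows "v \<in> M \<or> (\<lambda>x. - v x) \<in> M"
proof (rule ccontr)
  assume "\<not> (v \<in> M \<or> (\<lambda>x. - v x) \<in> M)"
  then have "v \<notin> M" "(\<lambda>x. - v x) \<notin> M" by auto
  have "cone_adjoin M v = M"
    using subset_cone_adjoin cone_adjoin_subset_real_subspace[OF E M(1) v]
      convex_cone_fn_cone_adjoin[OF M(2)] pointed_fn_cone_adjoin[OF M(2,3) \<open>(\<lambda>x. - v x) \<notin> M\<close>]
    by (rule maximal)
  then show False using mem_cone_adjoin[OF M(2), of v] \<open>v \<notin> M\<close> by simp
qed

lemma convex_cone_fn_Union_chain:
  assumes "\<C> \<noteq> {}" "chain\<^sub>\<subseteq> \<C>" "\<forall>K\<in>\<C>. convex_cone_fn K"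
  shows "convex_cone_fn (\<Union>\<C>)"
  unfolding convex_cone_fn_def
proof (intro conjI ballI allI impI)
  show "(\<lambda>_. 0) \<in> \<Union>\<C>" using assms(1,3) convex_cone_fn_zero by blast
next
  fix u w assume "u \<in> \<Union>\<C>" "w \<in> \<Union>\<C>"
  then obtain K L where KL: "K \<in> \<C>" "L \<in> \<C>" "u \<in> K" "w \<in> L" by blast
  with assms(2) consider "u \<in> L" | "w \<in> K" unfolding chain_subset_def by blast
  then show "(\<lambda>x. u x + w x) \<in> \<Union>\<C>"
    by cases (use KL assms(3) convex_cone_fn_add in blast)+
next
  fix r :: real and u assume "r \<ge> 0" "u \<in> \<Union>\<C>"
  with assms(3) show "(\<lambda>x. complex_of_real r * u x) \<in> \<Union>\<C>"
    using convex_cone_fn_scale by blast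
qed

lemma pointed_fn_Union_chain:
  assumes "chain\<^sub>\<subseteq> \<C>" "\<forall>K\<in>\<C>. pointed_fn K"
  shows "pointed_fn (\<Union>\<C>)"
  unfolding pointed_fn_def
proof (intro ballI impI)
  fix v assume "v \<in> \<Union>\<C>" "(\<lambda>x. - v x) \<in> \<Union>\<C>"
  then obtain K L where "K \<in> \<C>" "L \<in> \<C>" "v \<in> K" "(\<lambda>x. - v x) \<in> L" by blast
  with assms show "v = (\<lambda>_. 0)"
    unfolding chain_subset_def by (metis pointed_fnD subsetD)
qed

lemma pointed_cone_extends_to_total:
  assumes E: "real_subspace_fn E" and C: "C \<subseteq> E" "convex_cone_fn C" "pointed_fn C"
  obtains M where "C \<subseteq> M" "convex_cone_fn M" "pointed_fn M"
    "\<forall>v\<in>E. v \<in> M \<or> (\<lambda>x. - v x) \<in> M"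
proof -
  define \<A> where "\<A> = {K. C \<subseteq> K \<and> K \<subseteq> E \<and> convex_cone_fn K \<and> pointed_fn K}"
  have "\<exists>M\<in>\<A>. \<forall>K\<in>\<A>. M \<subseteq> K \<longrightarrow> K = M"
  proof (rule subset_Zorn_nonempty)
    show "\<A> \<noteq> {}" using C unfolding \<A>_def by blast
  next
    fix \<C> assume "\<C> \<noteq> {}" "subset.chain \<A> \<C>"
    then have "\<C> \<noteq> {}" "chain\<^sub>\<subseteq> \<C>" "\<C> \<subseteq> \<A>"
      unfolding chain_subset_alt_def subset.chain_def by auto
    then show "\<Union>\<C> \<in> \<A>"
      using convex_cone_fn_Union_chain pointed_fn_Union_chain unfolding \<A>_def by blast
  qed
  then obtain M where "M \<in> \<A>" and maximal_in_\<A>: "\<forall>K\<in>\<A>. M \<subseteq> K \<longrightarrow> K = M" by blast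
  then have M: "C \<subseteq> M" "M \<subseteq> E" "convex_cone_fn M" "pointed_fn M"
    unfolding \<A>_def by blast+
  have maximal: "K = M" if "M \<subseteq> K" "K \<subseteq> E" "convex_cone_fn K" "pointed_fn K" for K
    using maximal_in_\<A> that M(1) unfolding \<A>_def by blast
  show ?thesis
    using that[OF M(1,3,4)] maximal_pointed_cone_total[OF E M(2-4) maximal] by blast
qed

lemma real_linear_order_cone_order:
  assumes E: "real_subspace_fn E" and K: "convex_cone_fn K" "pointed_fn K"
    and total: "\<forall>v\<in>E. v \<in> K \<or> (\<lambda>x. - v x) \<in> K"
  shows "real_linear_order E (cone_order E K)"
  unfolding real_linear_order_def cone_order_def
proof (intro conjI ballI allI impI; (elim conjE)?)
  fix a b assume "a \<in> E" "b \<in> E" "(\<lambda>x. b x - a x) \<in> K" "(\<lambda>x. a x - b x) \<in> K"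
  then have "(\<lambda>x. b x - a x) = (\<lambda>_. 0)" using pointed_fnD[OF K(2), of "\<lambda>x. b x - a x"] by simp
  then show "a = b" by (simp add: fun_eq_iff)
next
  fix a b c assume "(\<lambda>x. b x - a x) \<in> K" "(\<lambda>x. c x - b x) \<in> K"
  then show "(\<lambda>x. c x - a x) \<in> K" using convex_cone_fn_add[OF K(1)] by fastforce
next
  fix a b assume "a \<in> E" "b \<in> E"
  then show "a \<in> E \<and> b \<in> E \<and> (\<lambda>x. b x - a x) \<in> K \<or> b \<in> E \<and> a \<in> E \<and> (\<lambda>x. a x - b x) \<in> K"
    using total real_subspace_fn_diff[OF E] by fastforce
next
  fix a b and r :: real assume "r > 0" "(\<lambda>x. b x - a x) \<in> K"
  then show "(\<lambda>x. complex_of_real r * b x - complex_of_real r * a x) \<in> K"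
    using convex_cone_fn_scale[OF K(1), of r] by (fastforce simp: right_diff_distrib)
next
  fix a b and r :: real assume "r < 0" "(\<lambda>x. b x - a x) \<in> K"
  then show "(\<lambda>x. complex_of_real r * a x - complex_of_real r * b x) \<in> K"
    using convex_cone_fn_scale[OF K(1), of "- r"] by (fastforce simp: algebra_simps)
qed (auto simp: convex_cone_fn_zero[OF K(1)] real_subspace_fn_add[OF E] real_subspace_fn_scale[OF E])

lemma roots_nonzero: "\<alpha> \<in> roots smul br H \<Longrightarrow> \<alpha> \<noteq> (\<lambda>_. 0)"
  unfolding roots_def by blast

lemma triangular_pos_neg_roots:
  assumes order: "real_linear_order (real_span (roots smul br H)) le"
  shows "triangular smul br H (pos_roots smul br H le) (neg_roots smul br H le)"
proof -
  let ?R = "roots smul br H"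
  let ?P = "pos_roots smul br H le" and ?N = "neg_roots smul br H le"
  let ?A = "?P \<union> (\<lambda>\<alpha> x. - \<alpha> x) ` ?N"
  have zero: "(\<lambda>_. 0) \<in> real_span ?R"
    by (rule real_subspace_fn_zero[OF real_subspace_fn_real_span])
  have P: "?P = {\<alpha> \<in> ?R. le (\<lambda>_. 0) \<alpha>}" and N: "?N = {\<alpha> \<in> ?R. le \<alpha> (\<lambda>_. 0)}"
    unfolding pos_roots_def neg_roots_def using roots_nonzero by blast+
  have "?P \<union> ?N = ?R" using order_total[OF order zero] subset_real_span unfolding P N by blast
  moreover have "?P \<inter> ?N = {}"
    using order_antisym[OF order] order_mem[OF order] roots_nonzero unfolding P N by blast
  moreover have "\<forall>a\<in>?A. le (\<lambda>_. 0) a"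
    using order_neg[OF order] unfolding P N by fastforce
  then have "\<forall>v\<in>real_cone ?A. le (\<lambda>_. 0) v"
    using order_nonneg_real_cone[OF order zero] by blast
  then have "\<forall>V. real_subspace_fn V \<and> V \<subseteq> real_cone ?A \<longrightarrow> V \<subseteq> {\<lambda>_. 0}"
    using order_nonneg_subspace_trivial[OF order] by (meson subsetD)
  ultimately show ?thesis unfolding triangular_def by blast
qed

lemma triangularD:
  assumes "triangular smul br H P N"
  shows "P \<union> N = roots smul br H" "P \<inter> N = {}"
    and "real_subspace_fn V \<Longrightarrow> V \<subseteq> real_cone (P \<union> (\<lambda>\<alpha> x. - \<alpha> x) ` N) \<Longrightarrow> V \<subseteq> {\<lambda>_. 0}"
  using assms unfolding triangular_def by blast+

lemma triangular_imp_real_linear_order: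
  assumes "triangular smul br H P N"
  obtains le where "real_linear_order (real_span (roots smul br H)) le" "pos_roots smul br H le = P"
proof -
  let ?R = "roots smul br H" and ?E = "real_span (roots smul br H)"
  let ?A = "P \<union> (\<lambda>\<alpha> x. - \<alpha> x) ` N"
  have E: "real_subspace_fn ?E" by (rule real_subspace_fn_real_span)
  have RE: "?R \<subseteq> ?E" by (rule subset_real_span)
  have PN: "P \<union> N = ?R" by (rule triangularD(1)[OF assms])
  have "P \<subseteq> ?E" "N \<subseteq> ?E" using PN RE by blast+
  then have AE: "?A \<subseteq> ?E" using real_subspace_fn_neg[OF E] by blast
  have "pointed_fn (real_cone ?A)"
    by (rule pointed_fn_if_no_subspace[OF convex_cone_fn_real_cone triangularD(3)[OF assms]])
  note C = real_cone_subset_real_subspace[OF E AE] convex_cone_fn_real_cone this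
  obtain M where M: "real_cone ?A \<subseteq> M" "convex_cone_fn M" "pointed_fn M"
    and total: "\<forall>v\<in>?E. v \<in> M \<or> (\<lambda>x. - v x) \<in> M"
    using pointed_cone_extends_to_total[OF E C] by blast
  have AM: "?A \<subseteq> M" using subset_real_cone M(1) by (rule subset_trans)
  have "pos_roots smul br H (cone_order ?E M) = {\<alpha> \<in> ?R. \<alpha> \<in> M}"
    using RE roots_nonzero[of _ smul br H] real_subspace_fn_zero[OF E]
    unfolding pos_roots_def cone_order_def by auto
  also have "\<dots> = P"
  proof
    show "P \<subseteq> {\<alpha> \<in> ?R. \<alpha> \<in> M}" using PN AM by blast
    show "{\<alpha> \<in> ?R. \<alpha> \<in> M} \<subseteq> P"
    proof
      fix \<alpha> assume \<alpha>: "\<alpha> \<in> {\<alpha> \<in> ?R. \<alpha> \<in> M}"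
      show "\<alpha> \<in> P"
      proof (rule ccontr)
        assume "\<alpha> \<notin> P"
        then have "\<alpha> \<in> N" using \<alpha> PN by blast
        then have "(\<lambda>x. - \<alpha> x) \<in> M" using AM by blast
        then show False using \<alpha> pointed_fnD[OF M(3)] roots_nonzero by blast
      qed
    qed
  qed
  finally show ?thesis using that real_linear_order_cone_order[OF E M(2,3) total] by blast
qed

theorem proposition9:
  fixes smul :: "complex \<Rightarrow> 'g::ab_group_add \<Rightarrow> 'g"
    and br :: "'g \<Rightarrow> 'g \<Rightarrow> 'g"
    and H :: "'g set"
  assumes "lie_algebra smul br"
    and "cartan_subalgebra smul br H"
    and "root_decomposition smul br H"
  shows "(\<forall>le. real_linear_order (real_span (roots smul br H)) le \<longrightarrow>
            triangular smul br H (pos_roots smul br H le) (neg_roots smul br H le)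
            \<and> borel_subalgebra smul br H (borel_of smul br H (pos_roots smul br H le)))
       \<and> (\<forall>B. borel_subalgebra smul br H B \<longrightarrow>
            (\<exists>le. real_linear_order (real_span (roots smul br H)) le
                  \<and> B = borel_of smul br H (pos_roots smul br H le)))"
proof (intro conjI allI impI)
  fix le assume "real_linear_order (real_span (roots smul br H)) le"
  then show "triangular smul br H (pos_roots smul br H le) (neg_roots smul br H le)"
    by (rule triangular_pos_neg_roots)
  then show "borel_subalgebra smul br H (borel_of smul br H (pos_roots smul br H le))"
    unfolding borel_subalgebra_def by blast
next
  fix B assume "borel_subalgebra smul br H B"
  then obtain P N where "triangular smul br H P N" and B: "B = borel_of smul br H P"
    unfolding borel_subalgebra_def by blast
  from \<open>triangular smul br H P N\<close> obtain le
    where "real_linear_order (real_span (roots smul br H)) le" and "pos_roots smul br H le = P"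
    by (rule triangular_imp_real_linear_order)
  then show "\<exists>le. real_linear_order (real_span (roots smul br H)) le
      \<and> B = borel_of smul br H (pos_roots smul br H le)"
    using B by blast
qed

end
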